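(* Let $m,n\ge2$ be integers and let $g_n(z)=\frac{z^n+n-1}{n}$ and $g_{m,n}(z)=\frac{(z^m+mn-1)^n}{(mn)^n}$. Both are polynomials having $1$ as a parabolic fixed point with multiplier $1$. For every $0\le r\le1$, with $D_r:=\{z:|z-(1-r)|<r\}$, one has $g_n(\overline{D_r})\subset D_r\cup\{1\}$ and $g_{m,n}(\overline{D_r})\subset D_r\cup\{1\}$. In particular, the immediate parabolic basins of $1$ of $g_n$ and of $g_{m,n}$ both contain the unit disk $\mathbb{D}$. *)

theory Defs
  imports "HOL-Analysis.Analysis"
begin

definition g_poly :: "nat \<Rightarrow> complex \<Rightarrow> complex" where
  "g_poly n z = (z ^ n + of_nat n - 1) / of_nat n"

definition g2_poly :: "nat \<Rightarrow> nat \<Rightarrow> complex \<Rightarrow> complex" where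
  "g2_poly m n z = (z ^ m + of_nat (m * n) - 1) ^ n / (of_nat (m * n)) ^ n"

definition Dr :: "real \<Rightarrow> complex set" where
  "Dr r = ball (complex_of_real (1 - r)) r"

definition basin :: "(complex \<Rightarrow> complex) \<Rightarrow> complex \<Rightarrow> complex set" where
  "basin g p = {z. (\<lambda>k. (g ^^ k) z) \<longlonglongrightarrow> p}"

definition immediate_parabolic_basin ::
  "(complex \<Rightarrow> complex) \<Rightarrow> complex \<Rightarrow> complex set \<Rightarrow> bool" where
  "immediate_parabolic_basin g p U \<longleftrightarrow>
     (\<exists>z \<in> interior (basin g p). U = connected_component_set (interior (basin g p)) z)
     \<and> p \<in> frontier U"

end

theory Submission
  imports Defs
begin

text \<open>For \<open>c \<ge> 0\<close> the set \<open>horodisk c\<close> is the closed disk of radius \<open>1/(c+1)\<close> internally tangent to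
  the unit circle at \<open>1\<close>; the closed disk \<open>closure (Dr r)\<close> is \<open>horodisk ((1 - r)/r)\<close>.
  Both maps send \<open>horodisk c\<close> into \<open>horodisk (c + 1)\<close>: a power \<open>z\<^sup>m\<close> divides \<open>c\<close> by at most \<open>m\<close>
  (Cauchy--Schwarz on \<open>1 - z\<^sup>m = (1 - z) \<Sum>z\<^sup>i\<close>), while the affine map \<open>u \<mapsto> 1 - (1 - u)/N\<close>
  turns \<open>c\<close> into \<open>N c + N - 1\<close>. Since \<open>horodisk (1/r) \<subseteq> Dr r \<union> {1}\<close>, this gives the
  invariance of the disks. Iterating from \<open>horodisk 0\<close>, the closed unit disk, the \<open>k\<close>-th
  iterate lies in \<open>horodisk k\<close>, whose points are within \<open>2/k\<close> of \<open>1\<close>; so the unit disk lies in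
  the basin, and \<open>1\<close> is on the boundary of its component because real points \<open>t > 1\<close> are
  pushed further to the right and never converge to \<open>1\<close>.\<close>

definition horodisk :: "real \<Rightarrow> complex set" where
  "horodisk c = {z. c * (cmod (1 - z))\<^sup>2 \<le> 1 - (cmod z)\<^sup>2}"

lemma horodisk_antimono: "a \<le> b \<Longrightarrow> horodisk b \<subseteq> horodisk a"
  unfolding horodisk_def by (auto intro: order_trans[OF mult_right_mono])

lemma horodisk_0: "horodisk 0 = cball 0 1"
  by (auto simp: horodisk_def power_le_one_iff abs_le_square_iff)

lemma norm_le_1_if_in_horodisk:
  assumes "z \<in> horodisk c" "c \<ge> 0"
  shows "cmod z \<le> 1"
proof -
  have "0 \<le> c * (cmod (1 - z))\<^sup>2"
    using assms(2) by simp
  hence "(cmod z)\<^sup>2 \<le> 1"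
    using assms(1) by (simp add: horodisk_def)
  thus ?thesis
    by (simp add: power_le_one_iff)
qed

lemma dist_1_le_if_in_horodisk:
  assumes "z \<in> horodisk c" "c \<ge> 0"
  shows "c * dist z 1 \<le> 2"
proof (cases "z = 1")
  case False
  have "(c * cmod (1 - z)) * cmod (1 - z) = c * (cmod (1 - z))\<^sup>2"
    by (simp add: power2_eq_square)
  also have "\<dots> \<le> (1 - cmod z) * (1 + cmod z)"
    using assms(1) by (simp add: horodisk_def power2_eq_square algebra_simps)
  also have "\<dots> \<le> 2 * cmod (1 - z)"
    using norm_le_1_if_in_horodisk[OF assms] norm_triangle_ineq2[of 1 z]
    by (subst mult.commute, intro mult_mono) auto
  finally show ?thesis
    using False by (simp add: dist_norm norm_minus_commute)
qed (use assms in simp)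

lemma norm_sum_powers_squared_le:
  fixes z :: complex
  assumes "cmod z \<le> 1"
  shows "(1 - (cmod z)\<^sup>2) * (cmod (\<Sum>i<m. z ^ i))\<^sup>2 \<le> real m * (1 - (cmod z) ^ (2 * m))"
proof -
  let ?t = "cmod z"
  have "(cmod (\<Sum>i<m. z ^ i))\<^sup>2 \<le> (\<Sum>i<m. ?t ^ i)\<^sup>2"
    by (intro power_mono order_trans[OF norm_sum]) (auto simp: norm_power)
  also have "\<dots> \<le> real m * (\<Sum>i<m. (?t\<^sup>2) ^ i)"
    using sum_squared_le_sum_of_squares[of "\<lambda>i. ?t ^ i" "{..<m}"]
    by (simp add: power_mult[symmetric] mult.commute)
  finally have "(1 - ?t\<^sup>2) * (cmod (\<Sum>i<m. z ^ i))\<^sup>2 \<le> (1 - ?t\<^sup>2) * (real m * (\<Sum>i<m. (?t\<^sup>2) ^ i))"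
    using assms by (intro mult_left_mono) (auto simp: power_le_one)
  also have "\<dots> = real m * ((1 - ?t\<^sup>2) * (\<Sum>i<m. (?t\<^sup>2) ^ i))"
    by (simp only: mult_ac)
  also have "(1 - ?t\<^sup>2) * (\<Sum>i<m. (?t\<^sup>2) ^ i) = 1 - ?t ^ (2 * m)"
    using one_diff_power_eq[of "?t\<^sup>2" m] by (simp add: power_mult)
  finally show ?thesis .
qed

lemma power_in_horodisk:
  assumes "z \<in> horodisk c" "c \<ge> 0" "m \<ge> 1"
  shows "z ^ m \<in> horodisk (c / real m)"
proof -
  let ?S = "(cmod (\<Sum>i<m. z ^ i))\<^sup>2"
  have "c * (cmod (1 - z ^ m))\<^sup>2 = (c * (cmod (1 - z))\<^sup>2) * ?S"
    by (simp add: one_diff_power_eq[of z m] norm_mult power_mult_distrib)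
  also have "\<dots> \<le> (1 - (cmod z)\<^sup>2) * ?S"
    using assms(1) by (intro mult_right_mono) (auto simp: horodisk_def)
  also have "\<dots> \<le> real m * (1 - (cmod z) ^ (2 * m))"
    using norm_sum_powers_squared_le norm_le_1_if_in_horodisk[OF assms(1,2)] .
  also have "(cmod z) ^ (2 * m) = (cmod (z ^ m))\<^sup>2"
    by (simp add: norm_power power_mult[symmetric] mult.commute)
  finally show ?thesis
    using assms(3) by (simp add: horodisk_def pos_divide_le_eq mult.commute)
qed

lemma contraction_towards_1_in_horodisk:
  assumes "u \<in> horodisk c" "N > 0"
  shows "1 - (1 - u) / of_real N \<in> horodisk (N * c + N - 1)"
proof -
  obtain x y where u: "u = Complex x y" by (cases u)
  have "N * (c * ((1 - x)\<^sup>2 + y\<^sup>2)) \<le> N * (1 - (x\<^sup>2 + y\<^sup>2))"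
    using assms by (intro mult_left_mono) (auto simp: horodisk_def u cmod_power2)
  hence "(N * (c * ((1 - x)\<^sup>2 + y\<^sup>2)) + (N - 1) * ((1 - x)\<^sup>2 + y\<^sup>2)) / N\<^sup>2
      \<le> (N * (1 - (x\<^sup>2 + y\<^sup>2)) + (N - 1) * ((1 - x)\<^sup>2 + y\<^sup>2)) / N\<^sup>2"
    by (intro divide_right_mono) auto
  moreover have "(N * (c * ((1 - x)\<^sup>2 + y\<^sup>2)) + (N - 1) * ((1 - x)\<^sup>2 + y\<^sup>2)) / N\<^sup>2
      = (N * c + N - 1) * (((1 - x) / N)\<^sup>2 + (y / N)\<^sup>2)"
    using assms(2) by (simp add: field_simps power2_eq_square)
  moreover have "(N * (1 - (x\<^sup>2 + y\<^sup>2)) + (N - 1) * ((1 - x)\<^sup>2 + y\<^sup>2)) / N\<^sup>2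
      = 1 - ((1 - (1 - x) / N)\<^sup>2 + (y / N)\<^sup>2)"
    using assms(2) by (simp add: field_simps power2_eq_square)
  moreover have "1 - (1 - u) / of_real N = Complex (1 - (1 - x) / N) (y / N)"
    by (simp add: u complex_eq_iff)
  ultimately show ?thesis
    by (simp add: horodisk_def cmod_power2 power2_minus)
qed

lemma dist_tangent_center_squared:
  "(dist (of_real (1 - r)) z)\<^sup>2 - r\<^sup>2 = (1 - r) * (cmod (1 - z))\<^sup>2 - r * (1 - (cmod z)\<^sup>2)"
  by (simp add: dist_norm cmod_power2) (simp add: power2_eq_square algebra_simps)

lemma mem_Dr_iff:
  assumes "r \<ge> 0"
  shows "z \<in> Dr r \<longleftrightarrow> (1 - r) * (cmod (1 - z))\<^sup>2 < r * (1 - (cmod z)\<^sup>2)"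
proof -
  have "z \<in> Dr r \<longleftrightarrow> (dist (of_real (1 - r)) z)\<^sup>2 < r\<^sup>2"
    using assms unfolding Dr_def mem_ball
    by (metis abs_le_square_iff abs_of_nonneg zero_le_dist not_le)
  thus ?thesis
    using dist_tangent_center_squared[of r z] by linarith
qed

lemma closure_Dr_eq_horodisk:
  assumes "r > 0"
  shows "closure (Dr r) = horodisk ((1 - r) / r)"
proof -
  have "z \<in> closure (Dr r) \<longleftrightarrow> z \<in> horodisk ((1 - r) / r)" for z
  proof -
    have "z \<in> closure (Dr r) \<longleftrightarrow> (dist (of_real (1 - r)) z)\<^sup>2 \<le> r\<^sup>2"
      using assms unfolding Dr_def closure_ball[OF assms] mem_cball
      by (metis abs_le_square_iff abs_of_nonneg zero_le_dist less_imp_le)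
    also have "\<dots> \<longleftrightarrow> (1 - r) * (cmod (1 - z))\<^sup>2 \<le> r * (1 - (cmod z)\<^sup>2)"
      using dist_tangent_center_squared[of r z] by linarith
    also have "\<dots> \<longleftrightarrow> z \<in> horodisk ((1 - r) / r)"
      using assms by (simp add: horodisk_def field_simps)
    finally show ?thesis .
  qed
  thus ?thesis by blast
qed

lemma horodisk_inverse_subset_Dr:
  assumes "r > 0"
  shows "horodisk (1 / r) \<subseteq> Dr r \<union> {1}"
proof
  fix z assume z: "z \<in> horodisk (1 / r)"
  show "z \<in> Dr r \<union> {1}"
  proof (cases "z = 1")
    case False
    have "(1 - r) * (cmod (1 - z))\<^sup>2 < (cmod (1 - z))\<^sup>2"
      using assms False by simp
    also have "\<dots> \<le> r * (1 - (cmod z)\<^sup>2)"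
      using z assms by (simp add: horodisk_def field_simps)
    finally show ?thesis
      using assms by (simp add: mem_Dr_iff)
  qed simp
qed

lemma image_closure_Dr_subset:
  assumes shift: "\<And>c. c \<ge> 0 \<Longrightarrow> f ` horodisk c \<subseteq> horodisk (c + 1)"
    and "0 \<le> r" "r \<le> 1"
  shows "f ` closure (Dr r) \<subseteq> Dr r \<union> {1}"
proof (cases "r = 0")
  case False
  hence "r > 0" using assms(2) by simp
  have "f ` closure (Dr r) \<subseteq> horodisk ((1 - r) / r + 1)"
    unfolding closure_Dr_eq_horodisk[OF \<open>r > 0\<close>] using \<open>r > 0\<close> assms(3) by (intro shift) simp
  also have "(1 - r) / r + 1 = 1 / r"
    using \<open>r > 0\<close> by (simp add: field_simps)
  finally show ?thesis
    using horodisk_inverse_subset_Dr[OF \<open>r > 0\<close>] by blast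
qed (simp add: Dr_def)

lemma funpow_in_horodisk:
  assumes shift: "\<And>c. c \<ge> 0 \<Longrightarrow> f ` horodisk c \<subseteq> horodisk (c + 1)"
    and "z \<in> cball 0 1"
  shows "(f ^^ k) z \<in> horodisk (real k)"
proof (induction k)
  case 0
  show ?case using assms(2) by (simp add: horodisk_0)
next
  case (Suc k)
  hence "f ((f ^^ k) z) \<in> horodisk (real k + 1)"
    using shift[OF of_nat_0_le_iff] by blast
  thus ?case by (simp add: add.commute)
qed

lemma cball_subset_basin:
  assumes shift: "\<And>c. c \<ge> 0 \<Longrightarrow> f ` horodisk c \<subseteq> horodisk (c + 1)"
  shows "cball 0 1 \<subseteq> basin f 1"
proof
  fix z :: complex assume z: "z \<in> cball 0 1"
  have "\<forall>\<^sub>F k in sequentially. norm ((f ^^ k) z - 1) \<le> 2 / real k"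
    using eventually_gt_at_top[of 0]
  proof eventually_elim
    case (elim k)
    have "real k * dist ((f ^^ k) z) 1 \<le> 2"
      using dist_1_le_if_in_horodisk[OF funpow_in_horodisk[OF shift z]] by simp
    thus ?case using elim by (simp add: field_simps dist_norm)
  qed
  hence "(\<lambda>k. (f ^^ k) z - 1) \<longlonglongrightarrow> 0"
    by (rule Lim_null_comparison) (rule lim_const_over_n)
  thus "z \<in> basin f 1"
    by (simp add: basin_def LIM_zero_iff)
qed

lemma of_real_not_in_basin:
  assumes escape: "\<And>t. t \<ge> 1 \<Longrightarrow> \<exists>t'\<ge>t. f (of_real t) = of_real t'"
    and "t > 1"
  shows "of_real t \<notin> basin f 1"
proof
  have orbit: "\<exists>t'\<ge>t. (f ^^ k) (of_real t) = of_real t'" for k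
  proof (induction k)
    case (Suc k)
    then obtain t' where "t' \<ge> t" "(f ^^ k) (of_real t) = of_real t'" by blast
    with escape[of t'] \<open>t > 1\<close> show ?case by force
  qed auto
  assume "of_real t \<in> basin f 1"
  hence "(\<lambda>k. (f ^^ k) (of_real t)) \<longlonglongrightarrow> 1" by (simp add: basin_def)
  then obtain k where "dist ((f ^^ k) (of_real t)) 1 < t - 1"
    using \<open>t > 1\<close> unfolding lim_sequentially by (meson diff_gt_0_iff_gt order_refl)
  moreover obtain t' where "t' \<ge> t" "(f ^^ k) (of_real t) = of_real t'"
    using orbit by blast
  ultimately show False
    by (metis dist_of_real dist_real_def of_real_1 abs_ge_self not_le diff_right_mono order_trans)
qed

lemma immediate_parabolic_basin_containing_ball:
  assumes shift: "\<And>c. c \<ge> 0 \<Longrightarrow> f ` horodisk c \<subseteq> horodisk (c + 1)"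
    and escape: "\<And>t. t \<ge> 1 \<Longrightarrow> \<exists>t'\<ge>t. f (of_real t) = of_real t'"
  shows "\<exists>U. immediate_parabolic_basin f 1 U \<and> ball 0 1 \<subseteq> U"
proof (intro exI conjI)
  define U where "U = connected_component_set (interior (basin f 1)) 0"
  have interior: "ball 0 1 \<subseteq> interior (basin f 1)"
    using cball_subset_basin[OF shift] by (intro interior_maximal) auto
  thus ball: "ball 0 1 \<subseteq> U"
    unfolding U_def by (intro connected_component_maximal) auto
  have "1 \<in> closure U"
    using closure_mono[OF ball] by auto
  moreover have "1 \<notin> interior U"
  proof
    assume "1 \<in> interior U"
    then obtain e where "e > 0" "ball 1 e \<subseteq> U"
      by (meson mem_interior)
    moreover have "U \<subseteq> basin f 1"
      unfolding U_def using connected_component_subset interior_subset by blast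
    moreover have "of_real (1 + e/2) \<in> ball (of_real 1 :: complex) e"
      using \<open>e > 0\<close> by (simp only: mem_ball dist_of_real) (simp add: dist_real_def)
    ultimately show False
      using of_real_not_in_basin[OF escape, of "1 + e/2"] by auto
  qed
  moreover have "0 \<in> interior (basin f 1)"
    using interior by auto
  ultimately show "immediate_parabolic_basin f 1 U"
    unfolding immediate_parabolic_basin_def U_def frontier_def by blast
qed

lemma g_poly_eq: "n > 0 \<Longrightarrow> g_poly n z = 1 - (1 - z ^ n) / of_real (real n)"
  by (simp add: g_poly_def field_simps)

lemma g2_poly_eq:
  assumes "m > 0" "n > 0"
  shows "g2_poly m n z = (1 - (1 - z ^ m) / of_real (real (m * n))) ^ n"
proof -
  have "(z ^ m + of_nat (m * n) - 1) / of_nat (m * n) = 1 - (1 - z ^ m) / of_real (real (m * n))"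
    using assms by (simp add: field_simps)
  thus ?thesis by (simp add: g2_poly_def power_divide[symmetric])
qed

lemma g_poly_shifts_horodisk:
  assumes "n \<ge> 2" "c \<ge> 0"
  shows "g_poly n ` horodisk c \<subseteq> horodisk (c + 1)"
proof
  fix w assume "w \<in> g_poly n ` horodisk c"
  then obtain z where z: "z \<in> horodisk c" and w: "w = g_poly n z" by blast
  have "z ^ n \<in> horodisk (c / real n)"
    using power_in_horodisk[OF z] assms by simp
  from contraction_towards_1_in_horodisk[OF this, of "real n"]
  have "w \<in> horodisk (real n * (c / real n) + real n - 1)"
    using assms by (simp add: w g_poly_eq)
  also have "\<dots> \<subseteq> horodisk (c + 1)"
    using assms by (intro horodisk_antimono) simp
  finally show "w \<in> horodisk (c + 1)" .
qed

lemma g2_poly_shifts_horodisk: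
  assumes "m \<ge> 2" "n \<ge> 2" "c \<ge> 0"
  shows "g2_poly m n ` horodisk c \<subseteq> horodisk (c + 1)"
proof
  fix w assume "w \<in> g2_poly m n ` horodisk c"
  then obtain z where z: "z \<in> horodisk c" and w: "w = g2_poly m n z" by blast
  define v where "v = 1 - (1 - z ^ m) / of_real (real (m * n))"
  define c' where "c' = real n * c + real m * real n - 1"
  have "z ^ m \<in> horodisk (c / real m)"
    using power_in_horodisk[OF z] assms by simp
  hence "v \<in> horodisk (real (m * n) * (c / real m) + real (m * n) - 1)"
    unfolding v_def using assms by (intro contraction_towards_1_in_horodisk) simp_all
  also have "real (m * n) * (c / real m) + real (m * n) - 1 = c'"
    using assms by (simp add: c'_def)
  finally have v: "v \<in> horodisk c'" .
  have "real m * real n \<ge> 1"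
    using assms by (simp flip: of_nat_mult)
  moreover have "real n * c \<ge> 0"
    using assms by simp
  ultimately have "c' \<ge> 0"
    unfolding c'_def by linarith
  hence "w \<in> horodisk (c' / real n)"
    using power_in_horodisk[OF v] assms by (simp add: w g2_poly_eq v_def)
  also have "\<dots> \<subseteq> horodisk (c + 1)"
  proof (intro horodisk_antimono)
    have "c' / real n = c + real m - 1 / real n"
      using assms by (simp add: c'_def field_simps)
    moreover have "1 / real n \<le> 1" "real m \<ge> 2"
      using assms by simp_all
    ultimately show "c + 1 \<le> c' / real n"
      by linarith
  qed
  finally show "w \<in> horodisk (c + 1)" .
qed

lemma one_plus_mult_le_power: "1 \<le> (t::real) \<Longrightarrow> 1 + real m * (t - 1) \<le> t ^ m"
  using Bernoulli_inequality[of "t - 1" m] by simp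

lemma g_poly_real_escapes:
  assumes "n \<ge> 2" "t \<ge> 1"
  shows "\<exists>t'\<ge>t. g_poly n (of_real t) = of_real t'"
proof (intro exI conjI)
  show "g_poly n (of_real t) = of_real ((t ^ n + real n - 1) / real n)"
    by (simp add: g_poly_def)
  show "t \<le> (t ^ n + real n - 1) / real n"
    using one_plus_mult_le_power[OF assms(2), of n] assms(1)
    by (simp add: field_simps algebra_simps)
qed

lemma g2_poly_real_escapes:
  assumes "m \<ge> 2" "n \<ge> 2" "t \<ge> 1"
  shows "\<exists>t'\<ge>t. g2_poly m n (of_real t) = of_real t'"
proof (intro exI conjI)
  define u where "u = (t ^ m + real (m * n) - 1) / real (m * n)"
  show "g2_poly m n (of_real t) = of_real (u ^ n)"
    by (simp add: g2_poly_def u_def power_divide)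
  have "u = 1 + (t ^ m - 1) / (real m * real n)"
    using assms by (simp add: u_def field_simps)
  also have "\<dots> \<ge> 1 + (real m * (t - 1)) / (real m * real n)"
    by (intro add_left_mono divide_right_mono) (use one_plus_mult_le_power[OF assms(3), of m] in auto)
  finally have u: "u \<ge> 1 + (t - 1) / real n"
    using assms by simp
  have "t \<le> 1 + real n * (u - 1)"
    using mult_left_mono[OF u[THEN diff_right_mono, of 1], of "real n"] assms by simp
  also have "\<dots> \<le> u ^ n"
  proof (intro one_plus_mult_le_power)
    have "(t - 1) / real n \<ge> 0"
      using assms by simp
    thus "1 \<le> u" using u by linarith
  qed
  finally show "t \<le> u ^ n" .
qed

lemma has_field_derivative_g_poly_at_1:
  assumes "n \<ge> 2"
  shows "(g_poly n has_field_derivative 1) (at 1)"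
proof -
  have "g_poly n = (\<lambda>z. (z ^ n + of_nat n - 1) / of_nat n)"
    by (simp add: g_poly_def fun_eq_iff)
  thus ?thesis
    using assms by (auto intro!: derivative_eq_intros)
qed

lemma has_field_derivative_g2_poly_at_1:
  assumes "m \<ge> 2" "n \<ge> 2"
  shows "(g2_poly m n has_field_derivative 1) (at 1)"
proof -
  obtain k where k: "n = Suc k" using assms by (cases n) auto
  have g2: "g2_poly m n = (\<lambda>z. (z ^ m + of_nat (m * n) - 1) ^ n / of_nat (m * n) ^ n)"
    by (simp add: g2_poly_def fun_eq_iff)
  have "of_nat n * (of_nat (m * n) :: complex) ^ k * of_nat m = of_nat (m * n) ^ n"
    by (simp add: k algebra_simps)
  moreover have "(of_nat (m * n) :: complex) \<noteq> 0"
    using assms by simp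
  ultimately show ?thesis
    unfolding g2 by - (rule derivative_eq_intros refl | simp add: k)+
qed

theorem lemma2p5:
  fixes m n :: nat
  assumes "m \<ge> 2" and "n \<ge> 2"
  shows "g_poly n 1 = 1 \<and> (g_poly n has_field_derivative 1) (at 1)
       \<and> g2_poly m n 1 = 1 \<and> (g2_poly m n has_field_derivative 1) (at 1)
       \<and> (\<forall>r::real. 0 \<le> r \<and> r \<le> 1 \<longrightarrow>
            g_poly n ` closure (Dr r) \<subseteq> Dr r \<union> {1}
          \<and> g2_poly m n ` closure (Dr r) \<subseteq> Dr r \<union> {1})
       \<and> (\<exists>U. immediate_parabolic_basin (g_poly n) 1 U \<and> ball 0 1 \<subseteq> U)
       \<and> (\<exists>U. immediate_parabolic_basin (g2_poly m n) 1 U \<and> ball 0 1 \<subseteq> U)"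
proof (intro conjI allI impI)
  show "g_poly n 1 = 1" "g2_poly m n 1 = 1"
    using assms by (simp_all add: g_poly_def g2_poly_def)
  show "(g_poly n has_field_derivative 1) (at 1)" "(g2_poly m n has_field_derivative 1) (at 1)"
    using assms by (simp_all add: has_field_derivative_g_poly_at_1 has_field_derivative_g2_poly_at_1)
  show "\<exists>U. immediate_parabolic_basin (g_poly n) 1 U \<and> ball 0 1 \<subseteq> U"
    using assms g_poly_shifts_horodisk g_poly_real_escapes
    by (intro immediate_parabolic_basin_containing_ball)
  show "\<exists>U. immediate_parabolic_basin (g2_poly m n) 1 U \<and> ball 0 1 \<subseteq> U"
    using assms g2_poly_shifts_horodisk g2_poly_real_escapes
    by (intro immediate_parabolic_basin_containing_ball)
  fix r :: real assume "0 \<le> r \<and> r \<le> 1"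
  thus "g_poly n ` closure (Dr r) \<subseteq> Dr r \<union> {1}" "g2_poly m n ` closure (Dr r) \<subseteq> Dr r \<union> {1}"
    using assms by (intro image_closure_Dr_subset g_poly_shifts_horodisk g2_poly_shifts_horodisk; simp)+
qed

end
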